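(* Let $X$ be a nonnegative, absolutely continuous random variable with distribution function $F$, survival function $\bar F=1-F$, finite nonzero mean, quantile function $Q(u)=\inf\{x\in\mathbb R:F(x)\ge u\}$, $0<u<1$, satisfying $Q(0):=\lim_{u\to0}Q(u)=0$, and with $Q$ differentiable on $(0,1)$ with quantile density $q=Q'$. Let $h,l:[0,1]\to[0,1]$ be distortion functions that are strictly increasing and differentiable on $(0,1)$ with positive derivatives, such that $h(x)\le l(x)$ for all $0<x<1$ and $E[X_h]<E[X_l]<+\infty$, where for a distortion function $k$, $X_k$ denotes the random variable with survival function $k(\bar F(x))$, so that $E[X_k]=\int_0^\infty k(\bar F(s))\,ds$ and $X_k$ has quantile function $Q_k(u)=Q(1-k^{-1}(1-u))$. Let $g:(0,1)\to\mathbb R$ be differentiable with $g'\cdot Q_h$ and $g'\cdot Q_l$ integrable on $(0,1)$, and let $U$ be uniformly distributed on $(0,1)$. Then $$E\left[\left(\frac{q(1-l^{-1}(1-U))}{l'(l^{-1}(1-U))}-\frac{q(1-h^{-1}(1-U))}{h'(h^{-1}(1-U))}\right)(g(1)-g(U))\right]=E[g'(Z^L)]\,(E[X_l]-E[X_h]),$$ where $Z^L$ is a random variable with density $$f_{Z^L}(x)=\frac{Q(1-l^{-1}(1-x))-Q(1-h^{-1}(1-x))}{E[X_l]-E[X_h]},\qquad 0<x<1.$$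
   Context: A distortion function is a continuous, nondecreasing, piecewise differentiable function $h:[0,1]\to[0,1]$ with $h(0)=0$, $h(1)=1$. $g(1)$ denotes $\lim_{u\to1}g(u)$ where needed. *)

theory Defs
  imports "HOL-Probability.Probability"
begin

definition piecewise_differentiable_01 :: "(real \<Rightarrow> real) \<Rightarrow> bool" where
  "piecewise_differentiable_01 h \<longleftrightarrow>
     (\<exists>S. finite S \<and> (\<forall>x\<in>{0..1} - S. h differentiable (at x within {0..1})))"

definition distortion :: "(real \<Rightarrow> real) \<Rightarrow> bool" where
  "distortion h \<longleftrightarrow> continuous_on {0..1} h \<and> mono_on {0..1} h
     \<and> piecewise_differentiable_01 h
     \<and> h ` {0..1} \<subseteq> {0..1} \<and> h 0 = 0 \<and> h 1 = 1"

definition quantile :: "(real \<Rightarrow> real) \<Rightarrow> real \<Rightarrow> real" where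
  "quantile F u = Inf {x. u \<le> F x}"

definition distorted_mean :: "(real \<Rightarrow> real) \<Rightarrow> (real \<Rightarrow> real) \<Rightarrow> real" where
  "distorted_mean k F = (LBINT s:{0..}. k (1 - F s))"

end

theory Submission
  imports Defs
begin

text \<open>
  Write \<open>Q\<^sub>k(u) = Q(1 - k\<^sup>-\<^sup>1(1 - u))\<close> for the quantile function of \<open>X\<^sub>k\<close>. It is
  nondecreasing, tends to \<open>0\<close> at \<open>0\<close>, and by the chain and inverse function rules has
  derivative \<open>q(1 - k\<^sup>-\<^sup>1(1 - u)) / k'(k\<^sup>-\<^sup>1(1 - u))\<close>. For any such \<open>P\<close> with derivative
  \<open>p \<ge> 0\<close>, the identity \<open>\<integral>\<^sub>0\<^sup>1 p(u) (g(1) - g(u)) du = \<integral>\<^sub>0\<^sup>1 g'(t) P(t) dt\<close> follows by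
  writing \<open>g(1) - g(u) = \<integral>\<^sub>u\<^sup>1 g'\<close> and \<open>P(t) = \<integral>\<^sub>0\<^sup>t p\<close> and exchanging the order of
  integration, which Fubini's theorem allows because \<open>g' P\<close> is integrable. Here \<open>g'\<close> is
  integrable on \<open>[u,1)\<close> because \<open>P \<ge> P(u)\<close> there, unless \<open>P(u) = 0\<close>, in which case
  \<open>p(u) = 0\<close> as well. Subtracting the identities for \<open>Q\<^sub>h\<close> and \<open>Q\<^sub>l\<close> gives the theorem; the
  nonzero constant \<open>E[X\<^sub>l] - E[X\<^sub>h]\<close> only normalises the density of \<open>Z\<^sup>L\<close>.
\<close>

lemma mono_on_nonneg_of_tendsto_0:
  fixes P :: "real \<Rightarrow> real"
  assumes mono: "mono_on {a<..<b} P" and lim: "(P \<longlongrightarrow> 0) (at_right a)"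
    and u: "a < u" "u < b"
  shows "0 \<le> P u"
proof (rule tendsto_upperbound[OF lim])
  show "\<forall>\<^sub>F x in at_right a. P x \<le> P u"
    unfolding eventually_at_right_field
    using u by (intro exI[of _ u]) (auto intro!: mono_onD[OF mono])
qed simp

lemma mono_on_deriv_nonneg:
  fixes P :: "real \<Rightarrow> real"
  assumes mono: "mono_on {a<..<b} P" and deriv: "(P has_real_derivative D) (at u)"
    and u: "a < u" "u < b"
  shows "0 \<le> D"
proof (rule tendsto_lowerbound)
  show "((\<lambda>t. (P (u + t) - P u) / t) \<longlongrightarrow> D) (at_right 0)"
    using deriv unfolding DERIV_def by (rule filterlim_mono[OF _ order_refl at_le]) simp
  show "\<forall>\<^sub>F t in at_right 0. 0 \<le> (P (u + t) - P u) / t"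
    unfolding eventually_at_right_field
    using u by (intro exI[of _ "b - u"]) (auto intro!: divide_nonneg_pos mono_onD[OF mono])
qed simp

lemma set_borel_measurable_deriv:
  fixes P p :: "real \<Rightarrow> real"
  assumes S: "open S" and deriv: "\<And>x. x \<in> S \<Longrightarrow> (P has_real_derivative p x) (at x)"
  shows "set_borel_measurable borel S p"
proof -
  have "continuous_on S P"
    using deriv DERIV_isCont continuous_at_imp_continuous_on by blast
  have [measurable]: "S \<in> sets borel"
    using S by (rule borel_open)
  define Pt where "Pt x = indicator S x * P x" for x
  have [measurable]: "Pt \<in> borel_measurable borel"
    unfolding Pt_def
    using borel_measurable_continuous_on_indicator[OF _ \<open>continuous_on S P\<close>] by simp
  define d where "d = (\<lambda>n. inverse (real (Suc n)))"
  have d: "d \<longlonglongrightarrow> 0" "\<And>n. d n \<noteq> 0"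
    unfolding d_def using LIMSEQ_inverse_real_of_nat by auto
  show ?thesis
    unfolding set_borel_measurable_def real_scaleR_def
  proof (rule borel_measurable_LIMSEQ_real)
    show "(\<lambda>x. indicator S x * ((Pt (x + d n) - Pt x) / d n))
            \<in> borel_measurable borel" for n
      by measurable
    fix x
    show "(\<lambda>n. indicator S x * ((Pt (x + d n) - Pt x) / d n))
            \<longlonglongrightarrow> indicator S x * p x"
    proof (cases "x \<in> S")
      case True
      have "filterlim d (at 0) sequentially"
        using d by (simp add: filterlim_at)
      then have "(\<lambda>n. (P (x + d n) - P x) / d n) \<longlonglongrightarrow> p x"
        using deriv[OF True] unfolding DERIV_def by (rule filterlim_compose[rotated])
      moreover have "\<forall>\<^sub>F n in sequentially. x + d n \<in> S"
        using S True tendsto_add[OF tendsto_const d(1), of x] by (intro topological_tendstoD) auto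
      ultimately show ?thesis
        using True by (auto simp: Pt_def elim!: Lim_transform_eventually elim: eventually_mono)
    qed simp
  qed
qed

lemma set_borel_integral_of_has_integral_nonneg:
  fixes f :: "'a::euclidean_space \<Rightarrow> real"
  assumes f: "(f has_integral I) S" and nonneg: "\<And>x. x \<in> S \<Longrightarrow> 0 \<le> f x"
    and meas: "set_borel_measurable borel S f"
  shows "set_integrable lborel S f" "(LBINT x:S. f x) = I"
proof -
  have "f absolutely_integrable_on S"
    by (rule nonnegative_absolutely_integrable_1[OF has_integral_integrable[OF f] nonneg])
  then show si: "set_integrable lborel S f"
    unfolding set_integrable_def
    by (subst integrable_completion[symmetric]) (use meas in \<open>simp_all add: set_borel_measurable_def\<close>)
  show "(LBINT x:S. f x) = I"
    using set_borel_integral_eq_integral(2)[OF si] integral_unique[OF f] by (rule trans)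
qed

lemma has_integral_deriv_of_mono_on:
  fixes P p :: "real \<Rightarrow> real"
  assumes mono: "mono_on {a<..<b} P" and lim: "(P \<longlongrightarrow> L) (at_right a)"
    and deriv: "\<And>x. x \<in> {a<..<b} \<Longrightarrow> (P has_real_derivative p x) (at x)"
    and t: "a < t" "t < b"
  shows "(p has_integral P t - L) {a<..t}"
proof -
  have ftc: "(p has_integral P t - P s) {s..t}" if s: "a < s" "s \<le> t" for s
  proof (rule fundamental_theorem_of_calculus_interior[OF s(2)])
    show "continuous_on {s..t} P"
      using s t by (intro continuous_at_imp_continuous_on ballI DERIV_isCont[OF deriv]) auto
    show "(P has_vector_derivative p x) (at x)" if "x \<in> {s<..<t}" for x
      using deriv[of x] that s t by (simp add: has_real_derivative_iff_has_vector_derivative)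
  qed
  define s where "s n = a + (t - a) / real (Suc (Suc n))" for n
  have s: "a < s n" "s n \<le> t" "s (Suc n) \<le> s n" for n
  proof -
    have "(t - a) / real (Suc (Suc n)) \<le> (t - a) / 1"
      using t by (intro frac_le) auto
    moreover have "(t - a) / real (Suc (Suc (Suc n))) \<le> (t - a) / real (Suc (Suc n))"
      using t by (intro frac_le) auto
    ultimately show "a < s n" "s n \<le> t" "s (Suc n) \<le> s n"
      using t by (auto simp: s_def)
  qed
  have "(\<lambda>n. a + (t - a) * inverse (real (Suc (Suc n)))) \<longlonglongrightarrow> a + (t - a) * 0"
    by (intro tendsto_intros LIMSEQ_inverse_real_of_nat LIMSEQ_Suc)
  then have s_lim: "s \<longlonglongrightarrow> a"
    by (simp add: s_def[abs_def] divide_inverse)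
  let ?f = "\<lambda>k x. if x \<in> {s k..t} then p x else 0"
  show ?thesis
  proof (rule has_integral_monotone_convergence_increasing[where f = ?f])
    show "(?f k has_integral P t - P (s k)) {a<..t}" for k
      using ftc[OF s(1,2)] s(1)[of k] by (subst has_integral_restrict) auto
    show "?f k x \<le> ?f (Suc k) x" if "x \<in> {a<..t}" for k x
      using s[of k] that t mono_on_deriv_nonneg[OF mono deriv, of x] by auto
    show "(\<lambda>k. ?f k x) \<longlonglongrightarrow> p x" if x: "x \<in> {a<..t}" for x
    proof (rule tendsto_eventually)
      have "\<forall>\<^sub>F k in sequentially. s k < x"
        using s_lim x by (intro order_tendstoD) auto
      then show "\<forall>\<^sub>F k in sequentially. ?f k x = p x"
        by eventually_elim (use x in auto)
    qed
    have "filterlim s (at_right a) sequentially"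
      using s_lim s(1) by (intro tendsto_imp_filterlim_at_right always_eventually) auto
    then show "(\<lambda>k. P t - P (s k)) \<longlonglongrightarrow> P t - L"
      by (intro tendsto_diff tendsto_const filterlim_compose[OF lim])
  qed
qed

lemma set_integral_deriv_of_mono_on:
  fixes P p :: "real \<Rightarrow> real"
  assumes mono: "mono_on {a<..<b} P" and lim: "(P \<longlongrightarrow> L) (at_right a)"
    and deriv: "\<And>x. x \<in> {a<..<b} \<Longrightarrow> (P has_real_derivative p x) (at x)"
    and t: "a < t" "t < b"
  shows "set_integrable lborel {a<..t} p" "(LBINT x:{a<..t}. p x) = P t - L"
proof -
  have "set_borel_measurable borel {a<..<b} p"
    using deriv by (rule set_borel_measurable_deriv[OF open_greaterThanLessThan])
  then have meas: "set_borel_measurable borel {a<..t} p"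
    by (rule set_borel_measurable_subset) (use t in \<open>simp_all add: subset_eq\<close>)
  have nonneg: "0 \<le> p x" if "x \<in> {a<..t}" for x
    using that t mono_on_deriv_nonneg[OF mono deriv, of x] by auto
  note set_borel_integral_of_has_integral_nonneg[OF has_integral_deriv_of_mono_on[OF assms] nonneg meas]
  then show "set_integrable lborel {a<..t} p" "(LBINT x:{a<..t}. p x) = P t - L"
    by simp_all
qed

lemma set_integrable_of_mult_ge:
  fixes f w :: "'a \<Rightarrow> real"
  assumes int: "set_integrable M S (\<lambda>x. f x * w x)"
    and meas: "set_borel_measurable M S f"
    and w: "\<And>x. x \<in> S \<Longrightarrow> c \<le> w x" and c: "0 < c"
  shows "set_integrable M S f"
  unfolding set_integrable_def
proof (rule Bochner_Integration.integrable_bound)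
  show "integrable M (\<lambda>x. (indicator S x *\<^sub>R (f x * w x)) / c)"
    using int unfolding set_integrable_def by simp
  show "(\<lambda>x. indicator S x *\<^sub>R f x) \<in> borel_measurable M"
    using meas unfolding set_borel_measurable_def .
  show "AE x in M. norm (indicator S x *\<^sub>R f x) \<le> norm ((indicator S x *\<^sub>R (f x * w x)) / c)"
  proof (rule AE_I2)
    fix x
    show "norm (indicator S x *\<^sub>R f x) \<le> norm ((indicator S x *\<^sub>R (f x * w x)) / c)"
    proof (cases "x \<in> S")
      case True
      then have "\<bar>f x\<bar> * c \<le> \<bar>f x\<bar> * \<bar>w x\<bar>"
        using w[of x] c by (intro mult_left_mono) auto
      then show ?thesis
        using True c by (simp add: abs_mult field_simps)
    qed simp
  qed
qed

lemma tendsto_at_left_set_integral_deriv: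
  fixes g g' :: "real \<Rightarrow> real"
  assumes deriv: "\<And>x. x \<in> {a<..<b} \<Longrightarrow> (g has_real_derivative g' x) (at x)"
    and int: "set_integrable lborel {u..<b} g'" and u: "a < u" "u < b"
  shows "(g \<longlongrightarrow> g u + (LBINT t:{u..<b}. g' t)) (at_left b)"
proof -
  have "(LBINT t:{u..c}. g' t) = g c - g u" if c: "u < c" "c < b" for c
  proof -
    have "(g' has_integral g c - g u) {u..c}"
    proof (rule fundamental_theorem_of_calculus_interior)
      show "continuous_on {u..c} g"
        using u c by (intro continuous_at_imp_continuous_on ballI DERIV_isCont[OF deriv]) auto
      show "(g has_vector_derivative g' x) (at x)" if "x \<in> {u<..<c}" for x
        using deriv[of x] that u c by (simp add: has_real_derivative_iff_has_vector_derivative)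
    qed (use c in simp)
    moreover have "set_integrable lborel {u..c} g'"
      by (rule set_integrable_subset[OF int]) (use c in auto)
    ultimately show ?thesis
      using set_borel_integral_eq_integral(2) integral_unique by metis
  qed
  then have "\<forall>\<^sub>F c in at_left b. g u + (LBINT t:{u..c}. g' t) = g c"
    unfolding eventually_at_left_field using u by (intro exI[of _ u]) auto
  moreover have "((\<lambda>c. LBINT t:{u..c}. g' t) \<longlongrightarrow> (LBINT t:{u..<b}. g' t)) (at_left b)"
    by (rule tendsto_set_lebesgue_integral_at_left) (use u int in auto)
  ultimately show ?thesis
    using Lim_transform_eventually[OF tendsto_add[OF tendsto_const]] by blast
qed

lemma deriv_mult_Lim_at_left_diff:
  fixes P p g g' :: "real \<Rightarrow> real"
  assumes mono: "mono_on {a<..<b} P" and lim: "(P \<longlongrightarrow> 0) (at_right a)"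
    and dP: "\<And>x. x \<in> {a<..<b} \<Longrightarrow> (P has_real_derivative p x) (at x)"
    and dg: "\<And>x. x \<in> {a<..<b} \<Longrightarrow> (g has_real_derivative g' x) (at x)"
    and int: "set_integrable lborel {a<..<b} (\<lambda>x. g' x * P x)"
    and u: "a < u" "u < b"
  shows "p u * (Lim (at_left b) g - g u) = p u * (LBINT t:{u..<b}. g' t)"
proof (cases "P u = 0")
  case True
  \<comment> \<open>\<open>u\<close> minimises the nonnegative \<open>P\<close>, so \<open>p u = 0\<close>; this also makes the junk
     value of \<open>Lim\<close> harmless when \<open>P\<close> vanishes and \<open>g\<close> has no limit at \<open>b\<close>.\<close>
  have "p u = 0"
  proof (rule DERIV_local_min[OF dP])
    show "\<forall>y. \<bar>u - y\<bar> < min (u - a) (b - u) \<longrightarrow> P u \<le> P y"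
      using True mono_on_nonneg_of_tendsto_0[OF mono lim] by auto
  qed (use u in auto)
  then show ?thesis by simp
next
  case False
  then have Pu: "0 < P u"
    using mono_on_nonneg_of_tendsto_0[OF mono lim u] by simp
  have "set_integrable lborel {u..<b} g'"
  proof (rule set_integrable_of_mult_ge[where w = P])
    show "set_integrable lborel {u..<b} (\<lambda>x. g' x * P x)"
      by (rule set_integrable_subset[OF int]) (use u in auto)
    have "set_borel_measurable borel {a<..<b} g'"
      using dg by (rule set_borel_measurable_deriv[OF open_greaterThanLessThan])
    then have "set_borel_measurable borel {u..<b} g'"
      by (rule set_borel_measurable_subset) (use u in \<open>simp_all add: subset_eq\<close>)
    then show "set_borel_measurable lborel {u..<b} g'"
      by (simp add: set_borel_measurable_def)
    show "P u \<le> P x" if "x \<in> {u..<b}" for x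
      using that u by (intro mono_onD[OF mono]) auto
  qed fact
  then have "(g \<longlongrightarrow> g u + (LBINT t:{u..<b}. g' t)) (at_left b)"
    using u by (intro tendsto_at_left_set_integral_deriv[where a = a] dg) auto
  then have "Lim (at_left b) g = g u + (LBINT t:{u..<b}. g' t)"
    by (intro tendsto_Lim) simp_all
  then show ?thesis by simp
qed

lemma set_integral_swap_triangle:
  fixes f p P :: "real \<Rightarrow> real"
  assumes f_meas: "set_borel_measurable borel {a<..<b} f"
    and p_meas: "set_borel_measurable borel {a<..<b} p"
    and p_nonneg: "\<And>u. u \<in> {a<..<b} \<Longrightarrow> 0 \<le> p u"
    and P: "\<And>t. t \<in> {a<..<b} \<Longrightarrow> set_integrable lborel {a<..t} p \<and> (LBINT u:{a<..t}. p u) = P t"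
    and int: "set_integrable lborel {a<..<b} (\<lambda>t. f t * P t)"
  shows "set_integrable lborel {a<..<b} (\<lambda>u. p u * (LBINT t:{u..<b}. f t))"
    and "(LBINT u:{a<..<b}. p u * (LBINT t:{u..<b}. f t)) = (LBINT t:{a<..<b}. f t * P t)"
proof -
  let ?I = "{a<..<b}"
  have [measurable]: "(\<lambda>t. indicator ?I t * f t) \<in> borel_measurable lborel"
    "(\<lambda>u. indicator ?I u * p u) \<in> borel_measurable lborel"
    using f_meas p_meas by (simp_all add: set_borel_measurable_def)
  \<comment> \<open>The two iterated integrals of \<open>K\<close> are the two sides of the claim.\<close>
  define K where "K t u = indicator ?I t * f t * (indicator ?I u * p u) * of_bool (u \<le> t)" for t u
  have [measurable]: "(\<lambda>(t, u). K t u) \<in> borel_measurable (lborel \<Otimes>\<^sub>M lborel)"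
    unfolding K_def by measurable
  have K_t: "K t u = indicator ?I t * (f t * (indicator {a<..t} u * p u))" for t u
    by (auto simp: K_def indicator_def)
  have K_u: "K t u = indicator ?I u * (p u * (indicator {u..<b} t * f t))" for t u
    by (auto simp: K_def indicator_def)
  have abs_K: "\<bar>K t u\<bar> = indicator ?I t * (\<bar>f t\<bar> * (indicator {a<..t} u * p u))" for t u
    using p_nonneg[of u] by (auto simp: K_t indicator_def abs_mult)
  have P_nonneg: "0 \<le> P t" if "t \<in> ?I" for t
  proof -
    have "0 \<le> (LBINT u:{a<..t}. p u)"
      unfolding set_lebesgue_integral_def using p_nonneg that
      by (intro Bochner_Integration.integral_nonneg) (auto simp: indicator_def)
    then show ?thesis using P[OF that] by simp
  qed
  have integrable_K_t: "integrable lborel (K t)" for t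
    using P[of t] by (cases "t \<in> ?I") (auto simp: K_t[abs_def] set_integrable_def)
  have integral_K_t: "(\<integral>u. K t u \<partial>lborel) = indicator ?I t * (f t * P t)" for t
    using P[of t] by (cases "t \<in> ?I") (auto simp: K_t set_lebesgue_integral_def)
  have integral_abs_K_t: "(\<integral>u. \<bar>K t u\<bar> \<partial>lborel) = \<bar>indicator ?I t * (f t * P t)\<bar>" for t
    using P[of t] P_nonneg[of t]
    by (cases "t \<in> ?I") (auto simp: abs_K set_lebesgue_integral_def abs_mult)
  have integral_K_u: "(\<integral>t. K t u \<partial>lborel) = indicator ?I u * (p u * (LBINT t:{u..<b}. f t))" for u
    by (simp add: K_u set_lebesgue_integral_def)
  have K: "integrable (lborel \<Otimes>\<^sub>M lborel) (\<lambda>(t, u). K t u)"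
  proof (rule lborel_pair.Fubini_integrable)
    show "integrable lborel (\<lambda>t. \<integral>u. norm ((\<lambda>(t, u). K t u) (t, u)) \<partial>lborel)"
      using integrable_norm[OF int[unfolded set_integrable_def]]
      by (simp add: integral_abs_K_t)
  qed (simp_all add: integrable_K_t)
  show "set_integrable lborel ?I (\<lambda>u. p u * (LBINT t:{u..<b}. f t))"
    using lborel_pair.integrable_snd[OF K] by (simp add: integral_K_u set_integrable_def)
  show "(LBINT u:?I. p u * (LBINT t:{u..<b}. f t)) = (LBINT t:?I. f t * P t)"
    using lborel_pair.Fubini_integral[OF K]
    by (simp add: integral_K_u integral_K_t set_lebesgue_integral_def)
qed

lemma set_integral_deriv_mult_Lim_at_left_diff:
  fixes P p g g' :: "real \<Rightarrow> real"
  assumes mono: "mono_on {a<..<b} P" and lim: "(P \<longlongrightarrow> 0) (at_right a)"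
    and dP: "\<And>x. x \<in> {a<..<b} \<Longrightarrow> (P has_real_derivative p x) (at x)"
    and dg: "\<And>x. x \<in> {a<..<b} \<Longrightarrow> (g has_real_derivative g' x) (at x)"
    and int: "set_integrable lborel {a<..<b} (\<lambda>x. g' x * P x)"
  shows "set_integrable lborel {a<..<b} (\<lambda>u. p u * (Lim (at_left b) g - g u))"
    and "(LBINT u:{a<..<b}. p u * (Lim (at_left b) g - g u)) = (LBINT t:{a<..<b}. g' t * P t)"
proof -
  have g'_meas: "set_borel_measurable borel {a<..<b} g'"
    using dg by (rule set_borel_measurable_deriv[OF open_greaterThanLessThan])
  have p_meas: "set_borel_measurable borel {a<..<b} p"
    using dP by (rule set_borel_measurable_deriv[OF open_greaterThanLessThan])
  have p_nonneg: "0 \<le> p u" if "u \<in> {a<..<b}" for u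
    using that mono_on_deriv_nonneg[OF mono dP] by auto
  have P_eq: "set_integrable lborel {a<..t} p \<and> (LBINT u:{a<..t}. p u) = P t"
    if "t \<in> {a<..<b}" for t
    using that set_integral_deriv_of_mono_on[OF mono lim dP] by auto
  note swap = set_integral_swap_triangle[OF g'_meas p_meas p_nonneg P_eq int]
  have tail: "p u * (Lim (at_left b) g - g u) = p u * (LBINT t:{u..<b}. g' t)"
    if "u \<in> {a<..<b}" for u
    using that by (intro deriv_mult_Lim_at_left_diff[OF mono lim dP dg int]) auto
  have "set_integrable lborel {a<..<b} (\<lambda>u. p u * (Lim (at_left b) g - g u))
      = set_integrable lborel {a<..<b} (\<lambda>u. p u * (LBINT t:{u..<b}. g' t))"
    by (rule set_integrable_cong) (simp_all add: tail)
  then show "set_integrable lborel {a<..<b} (\<lambda>u. p u * (Lim (at_left b) g - g u))"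
    using swap(1) by simp
  have "(LBINT u:{a<..<b}. p u * (Lim (at_left b) g - g u))
      = (LBINT u:{a<..<b}. p u * (LBINT t:{u..<b}. g' t))"
    by (rule set_lebesgue_integral_cong) (simp_all add: tail)
  then show "(LBINT u:{a<..<b}. p u * (Lim (at_left b) g - g u)) = (LBINT t:{a<..<b}. g' t * P t)"
    using swap(2) by simp
qed

lemma mono_on_quantile_cdf:
  assumes "real_distribution N"
  shows "mono_on {0<..<1} (quantile (cdf N))"
proof (rule mono_onI)
  interpret real_distribution N by fact
  fix u v :: real
  assume u: "u \<in> {0<..<1}" and v: "v \<in> {0<..<1}" and "u \<le> v"
  have "\<forall>\<^sub>F x in at_top. v < cdf N x"
    using cdf_lim_at_top_prob v by (intro order_tendstoD) auto
  then have "{x. v \<le> cdf N x} \<noteq> {}"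
    by (auto simp: eventually_at_top_linorder intro: less_imp_le)
  moreover have "bdd_below {x. u \<le> cdf N x}"
  proof -
    have "\<forall>\<^sub>F x in at_bot. cdf N x < u"
      using cdf_lim_at_bot u by (intro order_tendstoD) auto
    then obtain x0 where x0: "\<And>x. x \<le> x0 \<Longrightarrow> cdf N x < u"
      unfolding eventually_at_bot_linorder by auto
    show ?thesis
    proof (rule bdd_belowI)
      fix x assume "x \<in> {x. u \<le> cdf N x}"
      then show "x0 \<le> x" using x0[of x] by force
    qed
  qed
  ultimately show "quantile (cdf N) u \<le> quantile (cdf N) v"
    unfolding quantile_def using \<open>u \<le> v\<close> by (intro cInf_superset_mono) auto
qed

lemma distortion_image:
  assumes "distortion k"
  shows "k ` {0..1} = {0..1}"
proof
  show "k ` {0..1} \<subseteq> {0..1}"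
    using assms by (simp add: distortion_def)
  show "{0..1} \<subseteq> k ` {0..1}"
  proof
    fix y :: real assume "y \<in> {0..1}"
    then obtain x where "0 \<le> x" "x \<le> 1" "k x = y"
      using IVT'[of k 0 y 1] assms by (auto simp: distortion_def)
    then show "y \<in> k ` {0..1}" by auto
  qed
qed

lemma the_inv_into_distortion:
  fixes k :: "real \<Rightarrow> real"
  assumes k: "distortion k" and sm: "strict_mono_on {0..1} k"
  defines "k_inv \<equiv> the_inv_into {0..1} k"
  shows "strict_mono_on {0..1} k_inv" "continuous_on {0..1} k_inv"
    and "\<And>y. y \<in> {0<..<1} \<Longrightarrow> k_inv y \<in> {0<..<1}" "k_inv 1 = 1"
    and "\<And>y. y \<in> {0<..<1} \<Longrightarrow> k (k_inv y) = y"
proof -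
  have inj: "inj_on k {0..1}"
    using sm by (rule strict_mono_on_imp_inj_on)
  have img: "k ` {0..1} = {0..1}"
    using k by (rule distortion_image)
  have k_k_inv: "k (k_inv y) = y" if "y \<in> {0..1}" for y
    unfolding k_inv_def using f_the_inv_into_f[OF inj] img that by auto
  have k_inv_in: "k_inv y \<in> {0..1}" if "y \<in> {0..1}" for y
    unfolding k_inv_def by (rule the_inv_into_into[OF inj]) (use img that in auto)
  have k_inv_k: "k_inv (k x) = x" if "x \<in> {0..1}" for x
    unfolding k_inv_def using the_inv_into_f_f[OF inj that] .
  show sm_inv: "strict_mono_on {0..1} k_inv"
  proof (rule strict_mono_onI)
    fix x y :: real assume xy: "x \<in> {0..1}" "y \<in> {0..1}" "x < y"
    show "k_inv x < k_inv y"
    proof (rule ccontr)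
      assume "\<not> k_inv x < k_inv y"
      then have "k (k_inv y) \<le> k (k_inv x)"
        using xy k_inv_in by (intro strict_mono_on_leD[OF sm]) auto
      then show False using xy k_k_inv by auto
    qed
  qed
  show "continuous_on {0..1} k_inv"
    using continuous_on_inv_into[OF _ compact_Icc inj] k img
    by (simp add: k_inv_def distortion_def)
  show k_inv_1: "k_inv 1 = 1"
    using k_inv_k[of 1] k by (simp add: distortion_def)
  have "k_inv 0 = 0"
    using k_inv_k[of 0] k by (simp add: distortion_def)
  with k_inv_1 show "k_inv y \<in> {0<..<1}" if "y \<in> {0<..<1}" for y
    using that strict_mono_onD[OF sm_inv, of 0 y] strict_mono_onD[OF sm_inv, of y 1] by auto
  show "k (k_inv y) = y" if "y \<in> {0<..<1}" for y
    using that k_k_inv by auto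
qed

definition distorted_quantile :: "(real \<Rightarrow> real) \<Rightarrow> (real \<Rightarrow> real) \<Rightarrow> real \<Rightarrow> real" where
  "distorted_quantile Q k u = Q (1 - the_inv_into {0..1} k (1 - u))"

lemma mono_on_distorted_quantile:
  assumes Q: "mono_on {0<..<1} Q" and k: "distortion k" "strict_mono_on {0..1} k"
  shows "mono_on {0<..<1} (distorted_quantile Q k)"
proof (rule mono_onI)
  note k_inv = the_inv_into_distortion[OF k]
  fix u v :: real
  assume uv: "u \<in> {0<..<1}" "v \<in> {0<..<1}" "u \<le> v"
  then have "the_inv_into {0..1} k (1 - v) \<le> the_inv_into {0..1} k (1 - u)"
    by (intro strict_mono_on_leD[OF k_inv(1)]) auto
  moreover have "the_inv_into {0..1} k (1 - u) \<in> {0<..<1}" "the_inv_into {0..1} k (1 - v) \<in> {0<..<1}"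
    using uv k_inv(3)[of "1 - u"] k_inv(3)[of "1 - v"] by auto
  ultimately show "distorted_quantile Q k u \<le> distorted_quantile Q k v"
    unfolding distorted_quantile_def by (intro mono_onD[OF Q]) auto
qed

lemma distorted_quantile_tendsto_0:
  assumes Q: "(Q \<longlongrightarrow> 0) (at_right 0)" and k: "distortion k" "strict_mono_on {0..1} k"
  shows "(distorted_quantile Q k \<longlongrightarrow> 0) (at_right 0)"
proof -
  note k_inv = the_inv_into_distortion[OF k]
  have "continuous_on {0..1} (\<lambda>u. 1 - the_inv_into {0..1} k (1 - u))"
    by (intro continuous_intros continuous_on_compose2[OF k_inv(2)]) auto
  then have "((\<lambda>u. 1 - the_inv_into {0..1} k (1 - u)) \<longlongrightarrow> 0) (at_right 0)"
    using continuous_on_Icc_at_rightD[of 0 1] k_inv(4) by fastforce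
  moreover have "\<forall>\<^sub>F u in at_right 0. 0 < 1 - the_inv_into {0..1} k (1 - u)"
    unfolding eventually_at_right_field using k_inv(3) by (intro exI[of _ 1]) force
  ultimately have "filterlim (\<lambda>u. 1 - the_inv_into {0..1} k (1 - u)) (at_right 0) (at_right 0)"
    by (rule tendsto_imp_filterlim_at_right)
  then show ?thesis
    unfolding distorted_quantile_def[abs_def] by (rule filterlim_compose[OF Q])
qed

lemma has_real_derivative_distorted_quantile:
  assumes k: "distortion k" "strict_mono_on {0..1} k"
    and k_deriv: "(k has_real_derivative D) (at (the_inv_into {0..1} k (1 - u)))" "D \<noteq> 0"
    and Q_deriv: "(Q has_real_derivative q) (at (1 - the_inv_into {0..1} k (1 - u)))"
    and u: "u \<in> {0<..<1}"
  shows "(distorted_quantile Q k has_real_derivative q / D) (at u)"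
proof -
  note k_inv = the_inv_into_distortion[OF k]
  have "isCont (the_inv_into {0..1} k) (1 - u)"
    using continuous_on_interior[OF k_inv(2)] u by auto
  then have "(the_inv_into {0..1} k has_real_derivative inverse D) (at (1 - u))"
    using u k_inv(5)
    by (intro DERIV_inverse_function[where g = "the_inv_into {0..1} k" and x = "1 - u", OF k_deriv,
          where a = 0 and b = 1]) auto
  moreover have "((\<lambda>u. 1 - u) has_real_derivative - 1) (at u)"
    by (auto intro!: derivative_eq_intros)
  ultimately have "((\<lambda>u. the_inv_into {0..1} k (1 - u)) has_real_derivative inverse D * - 1) (at u)"
    by (rule DERIV_chain2[where g = "\<lambda>u. 1 - u" and x = u])
  then have "((\<lambda>u. 1 - the_inv_into {0..1} k (1 - u)) has_real_derivative 0 - inverse D * - 1) (at u)"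
    by (intro DERIV_diff DERIV_const)
  then have "((\<lambda>u. 1 - the_inv_into {0..1} k (1 - u)) has_real_derivative inverse D) (at u)"
    by simp
  from DERIV_chain2[OF Q_deriv this] show ?thesis
    unfolding distorted_quantile_def[abs_def] by (simp add: divide_inverse)
qed

lemma set_integral_distorted_quantile_deriv:
  fixes Q q k k' g g' :: "real \<Rightarrow> real"
  assumes Q_mono: "mono_on {0<..<1} Q" and Q_lim: "(Q \<longlongrightarrow> 0) (at_right 0)"
    and Q_deriv: "\<forall>u\<in>{0<..<1}. (Q has_real_derivative q u) (at u)"
    and k: "distortion k" "strict_mono_on {0..1} k"
    and k_deriv: "\<forall>x\<in>{0<..<1}. (k has_real_derivative k' x) (at x) \<and> k' x > 0"
    and g_deriv: "\<forall>x\<in>{0<..<1}. (g has_real_derivative g' x) (at x)"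
    and int: "set_integrable lborel {0<..<1} (\<lambda>u. g' u * distorted_quantile Q k u)"
  defines "k_inv \<equiv> the_inv_into {0..1} k"
  shows "set_integrable lborel {0<..<1}
      (\<lambda>u. q (1 - k_inv (1 - u)) / k' (k_inv (1 - u)) * (Lim (at_left 1) g - g u))"
    and "(LBINT u:{0<..<1}. q (1 - k_inv (1 - u)) / k' (k_inv (1 - u)) * (Lim (at_left 1) g - g u))
      = (LBINT u:{0<..<1}. g' u * distorted_quantile Q k u)"
proof -
  have "(distorted_quantile Q k has_real_derivative q (1 - k_inv (1 - u)) / k' (k_inv (1 - u))) (at u)"
    if u: "u \<in> {0<..<1}" for u
  proof (rule has_real_derivative_distorted_quantile[OF k _ _ _ u, folded k_inv_def])
    have "k_inv (1 - u) \<in> {0<..<1}"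
      using u the_inv_into_distortion(3)[OF k] by (auto simp: k_inv_def)
    then show "(k has_real_derivative k' (k_inv (1 - u))) (at (k_inv (1 - u)))"
      "k' (k_inv (1 - u)) \<noteq> 0" "(Q has_real_derivative q (1 - k_inv (1 - u))) (at (1 - k_inv (1 - u)))"
      using k_deriv Q_deriv by force+
  qed
  from set_integral_deriv_mult_Lim_at_left_diff[OF mono_on_distorted_quantile[OF Q_mono k]
      distorted_quantile_tendsto_0[OF Q_lim k] this _ int] g_deriv
  show "set_integrable lborel {0<..<1}
      (\<lambda>u. q (1 - k_inv (1 - u)) / k' (k_inv (1 - u)) * (Lim (at_left 1) g - g u))"
    and "(LBINT u:{0<..<1}. q (1 - k_inv (1 - u)) / k' (k_inv (1 - u)) * (Lim (at_left 1) g - g u))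
      = (LBINT u:{0<..<1}. g' u * distorted_quantile Q k u)"
    by auto
qed

theorem theorem1:
  fixes M :: "'a measure" and X :: "'a \<Rightarrow> real"
    and h l h' l' g g' q :: "real \<Rightarrow> real"
  assumes "prob_space M"
    and "X \<in> borel_measurable M"
    and "AE x in M. 0 \<le> X x"
    and "absolutely_continuous lborel (distr M lborel X)"
    and "integrable M X" and "(\<integral>x. X x \<partial>M) \<noteq> 0"
    and "((quantile (cdf (distr M lborel X))) \<longlongrightarrow> 0) (at_right 0)"
    and "\<forall>u\<in>{0<..<1}. (quantile (cdf (distr M lborel X)) has_real_derivative q u) (at u)"
    and "distortion h" and "distortion l"
    and "strict_mono_on {0..1} h" and "strict_mono_on {0..1} l"
    and "\<forall>x\<in>{0<..<1}. (h has_real_derivative h' x) (at x) \<and> h' x > 0"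
    and "\<forall>x\<in>{0<..<1}. (l has_real_derivative l' x) (at x) \<and> l' x > 0"
    and "\<forall>x\<in>{0<..<1}. h x \<le> l x"
    and "set_integrable lborel {0..} (\<lambda>s. l (1 - cdf (distr M lborel X) s))"
    and "distorted_mean h (cdf (distr M lborel X)) < distorted_mean l (cdf (distr M lborel X))"
    and "\<forall>x\<in>{0<..<1}. (g has_real_derivative g' x) (at x)"
    and "set_integrable lborel {0<..<1}
           (\<lambda>u. g' u * quantile (cdf (distr M lborel X)) (1 - the_inv_into {0..1} h (1 - u)))"
    and "set_integrable lborel {0<..<1}
           (\<lambda>u. g' u * quantile (cdf (distr M lborel X)) (1 - the_inv_into {0..1} l (1 - u)))"
  shows "(LBINT u:{0<..<1}.
            (q (1 - the_inv_into {0..1} l (1 - u)) / l' (the_inv_into {0..1} l (1 - u))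
             - q (1 - the_inv_into {0..1} h (1 - u)) / h' (the_inv_into {0..1} h (1 - u)))
            * (Lim (at_left 1) g - g u))
       = (LBINT x:{0<..<1}. g' x *
            ((quantile (cdf (distr M lborel X)) (1 - the_inv_into {0..1} l (1 - x))
              - quantile (cdf (distr M lborel X)) (1 - the_inv_into {0..1} h (1 - x)))
             / (distorted_mean l (cdf (distr M lborel X)) - distorted_mean h (cdf (distr M lborel X)))))
         * (distorted_mean l (cdf (distr M lborel X)) - distorted_mean h (cdf (distr M lborel X)))"
proof -
  let ?F = "cdf (distr M lborel X)"
  let ?Q = "quantile ?F"
  let ?\<rho> = "\<lambda>k k' u. q (1 - the_inv_into {0..1} k (1 - u)) / k' (the_inv_into {0..1} k (1 - u))"
  define G where "G = Lim (at_left 1) g"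
  define \<Delta> where "\<Delta> = distorted_mean l ?F - distorted_mean h ?F"
  interpret prob_space M by fact
  have "real_distribution (distr M lborel X)"
    using assms(2) by (auto simp: real_distribution_def real_distribution_axioms_def intro!: prob_space_distr)
  then have Q_mono: "mono_on {0<..<1} ?Q"
    by (rule mono_on_quantile_cdf)
  note h = set_integral_distorted_quantile_deriv[OF Q_mono assms(7,8,9,11,13,18),
      unfolded distorted_quantile_def, OF assms(19), folded G_def]
  note l = set_integral_distorted_quantile_deriv[OF Q_mono assms(7,8,10,12,14,18),
      unfolded distorted_quantile_def, OF assms(20), folded G_def]
  have "(LBINT u:{0<..<1}. (?\<rho> l l' u - ?\<rho> h h' u) * (G - g u))
      = (LBINT u:{0<..<1}. ?\<rho> l l' u * (G - g u)) - (LBINT u:{0<..<1}. ?\<rho> h h' u * (G - g u))"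
    unfolding left_diff_distrib by (rule set_integral_diff(2)[OF l(1) h(1)])
  also have "\<dots> = (LBINT u:{0<..<1}. g' u * ?Q (1 - the_inv_into {0..1} l (1 - u)))
      - (LBINT u:{0<..<1}. g' u * ?Q (1 - the_inv_into {0..1} h (1 - u)))"
    unfolding l(2) h(2) ..
  also have "\<dots> = (LBINT u:{0<..<1}. (g' u * ?Q (1 - the_inv_into {0..1} l (1 - u))
      - g' u * ?Q (1 - the_inv_into {0..1} h (1 - u))) / \<Delta>) * \<Delta>"
    using assms(17) set_integral_diff(2)[OF assms(20,19)]
    by (simp add: \<Delta>_def)
  also have "\<dots> = (LBINT u:{0<..<1}. g' u * ((?Q (1 - the_inv_into {0..1} l (1 - u))
      - ?Q (1 - the_inv_into {0..1} h (1 - u))) / \<Delta>)) * \<Delta>"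
    by (simp add: right_diff_distrib)
  finally show ?thesis
    unfolding G_def \<Delta>_def .
qed

end
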